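(* Let $W:\mathbb{N}\to\mathbb{R}$ be increasing with $W(N)\to\infty$, and let $(x_n)_{n\in\mathbb{N}}$ be a bounded complex sequence. Suppose $L=\lim_{N\to\infty}\frac{W(N-1)}{W(N)}$ exists and $L\in(0,1)$. For $n\ge0$ let $\lambda_n=L^n-L^{n+1}$. Then \[ \frac{1}{W(N)}\sum_{n=1}^{N}\Delta W(n)\,x_n=\sum_{k=0}^{N}\lambda_k x_{N-k}+o(1)\qquad (N\to\infty), \] where $\Delta W(n)=W(n)-W(n-1)$.
   Context: $\mathbb{N}=\{0,1,2,\dots\}$. The left side is the $N$-th $W$-weighted average $\mathbb{E}^W_{n\le N}x_n$ (defined for $N$ large enough that $W(N)\neq 0$). *)

theory Defs
  imports "HOL-Analysis.Analysis"
begin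

end

theory Submission
  imports Defs
begin

text \<open>
  Read backwards from \<open>N\<close>, the weighted average is \<open>\<Sum>k<N. c N k * x (N - k)\<close> with
  \<open>c N k = (W (N - k) - W (N - k - 1)) / W N\<close>. The ratio hypothesis gives
  \<open>W (N - k) / W N \<longlonglongrightarrow> L ^ k\<close>, hence \<open>c N k \<longlonglongrightarrow> \<lambda>\<^sub>k\<close> for every fixed \<open>k\<close>. Both weight
  families are nonnegative and their total masses \<open>(W N - W 0) / W N\<close> and \<open>\<Sum>k. \<lambda>\<^sub>k = 1\<close>
  agree in the limit, so by Scheffe's lemma \<open>c N\<close> converges to \<open>\<lambda>\<close> in the l1 norm.
  Against the bounded sequence \<open>x\<close> this gives the claim.
\<close>

lemma tendsto_shifted_ratio_power:
  fixes W :: "nat \<Rightarrow> 'a::real_normed_field"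
  assumes nonzero: "\<forall>\<^sub>F N in sequentially. W N \<noteq> 0"
    and ratio: "(\<lambda>N. W (N - 1) / W N) \<longlonglongrightarrow> L"
  shows "(\<lambda>N. W (N - j) / W N) \<longlonglongrightarrow> L ^ j"
proof (induction j)
  case 0
  have "\<forall>\<^sub>F N in sequentially. 1 = W (N - 0) / W N"
    using nonzero by eventually_elim simp
  then have "(\<lambda>N. W (N - 0) / W N) \<longlonglongrightarrow> 1"
    by (rule Lim_transform_eventually[OF tendsto_const])
  then show ?case
    by simp
next
  case (Suc j)
  have "(\<lambda>N. W (N - j - 1) / W (N - j)) \<longlonglongrightarrow> L"
    using filterlim_compose[OF ratio filterlim_minus_const_nat_at_top[of j]] by (simp add: o_def)
  from tendsto_mult[OF this Suc.IH]
  have "(\<lambda>N. W (N - j - 1) / W (N - j) * (W (N - j) / W N)) \<longlonglongrightarrow> L ^ Suc j"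
    by simp
  moreover have "\<forall>\<^sub>F N in sequentially. W (N - j) \<noteq> 0"
    using eventually_compose_filterlim[OF nonzero filterlim_minus_const_nat_at_top] .
  then have "\<forall>\<^sub>F N in sequentially. W (N - j - 1) / W (N - j) * (W (N - j) / W N) = W (N - Suc j) / W N"
    by eventually_elim simp
  ultimately show ?case
    by (rule Lim_transform_eventually)
qed

lemma sum_atLeast1_atMost_reverse:
  fixes f :: "nat \<Rightarrow> 'a::comm_monoid_add"
  shows "(\<Sum>n=1..N. f n) = (\<Sum>k<N. f (N - k))"
  by (rule sum.reindex_bij_witness[where i="\<lambda>n. N - n" and j="\<lambda>k. N - k"]) auto

lemma geometric_increments_sums:
  fixes L :: real
  assumes "\<bar>L\<bar> < 1"
  shows "(\<lambda>k. L ^ k - L ^ (k + 1)) sums 1"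
proof -
  have "(\<lambda>k. L ^ k) \<longlonglongrightarrow> 0"
    using assms by (intro LIMSEQ_power_zero) simp
  then show ?thesis
    using telescope_sums' by fastforce
qed

lemma weighted_sum_tendsto_zero:
  fixes y :: "nat \<Rightarrow> nat \<Rightarrow> 'a::real_normed_vector"
  assumes bound: "\<And>N k. norm (y N k) \<le> B"
    and l1: "(\<lambda>N. \<Sum>k\<in>A N. \<bar>d N k\<bar>) \<longlonglongrightarrow> 0"
  shows "(\<lambda>N. \<Sum>k\<in>A N. d N k *\<^sub>R y N k) \<longlonglongrightarrow> 0"
proof (rule Lim_null_comparison)
  have "norm (\<Sum>k\<in>A N. d N k *\<^sub>R y N k) \<le> (\<Sum>k\<in>A N. \<bar>d N k\<bar> * B)" for N
    by (intro order.trans[OF norm_sum] sum_mono) (simp add: mult_left_mono bound)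
  then show "\<forall>\<^sub>F N in sequentially. norm (\<Sum>k\<in>A N. d N k *\<^sub>R y N k) \<le> (\<Sum>k\<in>A N. \<bar>d N k\<bar>) * B"
    by (simp add: sum_distrib_right)
  show "(\<lambda>N. (\<Sum>k\<in>A N. \<bar>d N k\<bar>) * B) \<longlonglongrightarrow> 0"
    using tendsto_mult_left_zero[OF l1] .
qed

lemma scheffe_lemma_nat:
  fixes a :: "nat \<Rightarrow> nat \<Rightarrow> real" and b :: "nat \<Rightarrow> real"
  assumes a_nonneg: "\<forall>\<^sub>F N in sequentially. \<forall>k\<le>N. 0 \<le> a N k"
    and b_nonneg: "\<And>k. 0 \<le> b k" and "summable b"
    and pointwise: "\<And>k. (\<lambda>N. a N k) \<longlonglongrightarrow> b k"
    and mass: "(\<lambda>N. \<Sum>k\<le>N. a N k) \<longlonglongrightarrow> suminf b"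
  shows "(\<lambda>N. \<Sum>k\<le>N. \<bar>a N k - b k\<bar>) \<longlonglongrightarrow> 0"
proof -
  txt \<open>Since \<open>\<bar>a - b\<bar> = a + b - 2 min a b\<close> for \<open>a \<ge> 0\<close>, it suffices that the mass of the minima
    tends to \<open>suminf b\<close>; they are dominated by \<open>b\<close>, so Tannery's theorem applies. The \<open>max 0\<close>
    makes this domination hold for every \<open>N\<close>, not just eventually.\<close>
  define m where "m N k = max 0 (min (a N k) (b k))" for N k
  have "(\<lambda>N. \<Sum>k. if k \<le> N then m N k else 0) \<longlonglongrightarrow> suminf b"
  proof (rule tannerys_theorem[THEN conjunct2, THEN conjunct2])
    show "(\<lambda>N. if k \<le> N then m N k else 0) \<longlonglongrightarrow> b k" for k
    proof (rule Lim_transform_eventually)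
      have "(\<lambda>N. m N k) \<longlonglongrightarrow> max 0 (min (b k) (b k))"
        unfolding m_def by (intro tendsto_intros pointwise)
      then show "(\<lambda>N. m N k) \<longlonglongrightarrow> b k"
        using b_nonneg[of k] by simp
      show "\<forall>\<^sub>F N in sequentially. m N k = (if k \<le> N then m N k else 0)"
        using eventually_ge_at_top[of k] by eventually_elim simp
    qed
    show "\<forall>\<^sub>F (k, N) in sequentially \<times>\<^sub>F sequentially. norm (if k \<le> N then m N k else 0) \<le> b k"
      by (rule always_eventually) (auto simp: m_def b_nonneg)
  qed (use \<open>summable b\<close> in auto)
  moreover have "(\<Sum>k. if k \<le> N then m N k else 0) = (\<Sum>k\<le>N. m N k)" for N
    by (subst suminf_finite[of "{..N}"]) auto
  ultimately have min_mass: "(\<lambda>N. \<Sum>k\<le>N. m N k) \<longlonglongrightarrow> suminf b"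
    by simp
  have "(\<lambda>N. (\<Sum>k\<le>N. a N k) + (\<Sum>k\<le>N. b k) - 2 * (\<Sum>k\<le>N. m N k))
          \<longlonglongrightarrow> suminf b + suminf b - 2 * suminf b"
    by (intro tendsto_intros mass min_mass summable_LIMSEQ' \<open>summable b\<close>)
  moreover have "\<forall>\<^sub>F N in sequentially.
      (\<Sum>k\<le>N. a N k) + (\<Sum>k\<le>N. b k) - 2 * (\<Sum>k\<le>N. m N k) = (\<Sum>k\<le>N. \<bar>a N k - b k\<bar>)"
    using a_nonneg
  proof eventually_elim
    case (elim N)
    then have "\<bar>a N k - b k\<bar> = a N k + b k - 2 * m N k" if "k \<le> N" for k
      using that b_nonneg[of k] by (auto simp: m_def min_def max_def)
    then show ?case
      by (simp add: sum.distrib sum_subtractf sum_distrib_left)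
  qed
  ultimately show ?thesis
    by (auto intro: Lim_transform_eventually)
qed

definition increment_weight :: "(nat \<Rightarrow> real) \<Rightarrow> nat \<Rightarrow> nat \<Rightarrow> real" where
  "increment_weight W N k = (if k < N then (W (N - k) - W (N - Suc k)) / W N else 0)"

lemma weighted_average_eq_increment_weight_sum:
  fixes x :: "nat \<Rightarrow> 'a::real_vector"
  shows "(1 / W N) *\<^sub>R (\<Sum>n=1..N. (W n - W (n - 1)) *\<^sub>R x n)
    = (\<Sum>k\<le>N. increment_weight W N k *\<^sub>R x (N - k))"
  unfolding sum_atLeast1_atMost_reverse scaleR_sum_right lessThan_Suc_atMost[symmetric] sum.lessThan_Suc
  by (auto simp: increment_weight_def intro!: sum.cong)

lemma increment_weight_nonneg:
  assumes "mono W" and "0 \<le> W N"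
  shows "0 \<le> increment_weight W N k"
  using assms by (auto simp: increment_weight_def mono_def intro!: divide_nonneg_nonneg)

lemma sum_increment_weight:
  "(\<Sum>k\<le>N. increment_weight W N k) = (W N - W 0) / W N"
proof -
  have "(\<Sum>k\<le>N. increment_weight W N k) = (\<Sum>k<N. W (Suc (N - Suc k)) - W (N - Suc k)) / W N"
    unfolding lessThan_Suc_atMost[symmetric] sum.lessThan_Suc sum_divide_distrib
    by (auto simp: increment_weight_def Suc_diff_Suc intro!: sum.cong)
  also have "\<dots> = (W N - W 0) / W N"
    by (simp only: sum.nat_diff_reindex[where g="\<lambda>i. W (Suc i) - W i"] sum_lessThan_telescope)
  finally show ?thesis .
qed

lemma increment_weight_tendsto:
  assumes "filterlim W at_top sequentially"
    and "(\<lambda>N. W (N - 1) / W N) \<longlonglongrightarrow> L"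
  shows "(\<lambda>N. increment_weight W N k) \<longlonglongrightarrow> L ^ k - L ^ (k + 1)"
proof (rule Lim_transform_eventually)
  have "\<forall>\<^sub>F N in sequentially. 0 < W N"
    using assms(1) filterlim_at_top_dense by blast
  then have "\<forall>\<^sub>F N in sequentially. W N \<noteq> 0"
    by eventually_elim simp
  then have "(\<lambda>N. W (N - j) / W N) \<longlonglongrightarrow> L ^ j" for j
    using assms(2) by (rule tendsto_shifted_ratio_power)
  from tendsto_diff[OF this this[of "k + 1"]]
  show "(\<lambda>N. W (N - k) / W N - W (N - Suc k) / W N) \<longlonglongrightarrow> L ^ k - L ^ (k + 1)"
    by simp
  show "\<forall>\<^sub>F N in sequentially. W (N - k) / W N - W (N - Suc k) / W N = increment_weight W N k"
    using eventually_gt_at_top[of k] by eventually_elim (simp add: increment_weight_def diff_divide_distrib)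
qed

lemma increment_weight_l1_tendsto:
  assumes "mono W" and W_top: "filterlim W at_top sequentially"
    and ratio: "(\<lambda>N. W (N - 1) / W N) \<longlonglongrightarrow> L"
    and "0 < L" and "L < 1"
  shows "(\<lambda>N. \<Sum>k\<le>N. \<bar>increment_weight W N k - (L ^ k - L ^ (k + 1))\<bar>) \<longlonglongrightarrow> 0"
proof (rule scheffe_lemma_nat)
  have geometric: "(\<lambda>k. L ^ k - L ^ (k + 1)) sums 1"
    using assms by (intro geometric_increments_sums) simp
  then show "summable (\<lambda>k. L ^ k - L ^ (k + 1))"
    by (rule sums_summable)
  show "0 \<le> L ^ k - L ^ (k + 1)" for k
    using assms by (simp add: power_decreasing)
  have W_pos: "\<forall>\<^sub>F N in sequentially. 0 < W N"
    using W_top filterlim_at_top_dense by blast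
  then show "\<forall>\<^sub>F N in sequentially. \<forall>k\<le>N. 0 \<le> increment_weight W N k"
    by eventually_elim (simp add: increment_weight_nonneg \<open>mono W\<close>)
  show "(\<lambda>N. increment_weight W N k) \<longlonglongrightarrow> L ^ k - L ^ (k + 1)" for k
    using W_top ratio by (rule increment_weight_tendsto)
  have "(\<lambda>N. 1 - W 0 / W N) \<longlonglongrightarrow> 1 - 0"
    by (intro tendsto_intros tendsto_divide_0[OF tendsto_const] filterlim_at_top_imp_at_infinity W_top)
  moreover have "\<forall>\<^sub>F N in sequentially. 1 - W 0 / W N = (\<Sum>k\<le>N. increment_weight W N k)"
    using W_pos by eventually_elim (simp add: sum_increment_weight diff_divide_distrib)
  ultimately show "(\<lambda>N. \<Sum>k\<le>N. increment_weight W N k) \<longlonglongrightarrow> (\<Sum>k. L ^ k - L ^ (k + 1))"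
    using sums_unique[OF geometric] by (auto intro: Lim_transform_eventually)
qed

theorem mainTheorem8:
  fixes W :: "nat \<Rightarrow> real" and x :: "nat \<Rightarrow> complex" and L :: real
  assumes "mono W"
    and "filterlim W at_top sequentially"
    and "bounded (range x)"
    and "(\<lambda>N. W (N - 1) / W N) \<longlonglongrightarrow> L"
    and "0 < L" and "L < 1"
  shows "(\<lambda>N. complex_of_real (1 / W N) * (\<Sum>n=1..N. complex_of_real (W n - W (n - 1)) * x n)
              - (\<Sum>k=0..N. complex_of_real (L ^ k - L ^ (k + 1)) * x (N - k)))
         \<longlonglongrightarrow> 0"
proof -
  obtain B where "\<And>n. norm (x n) \<le> B"
    using assms(3) unfolding bounded_iff by auto
  then have "(\<lambda>N. \<Sum>k\<le>N. (increment_weight W N k - (L ^ k - L ^ (k + 1))) *\<^sub>R x (N - k)) \<longlonglongrightarrow> 0"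
    using increment_weight_l1_tendsto[OF assms(1,2,4-6)] by (rule weighted_sum_tendsto_zero)
  moreover have "complex_of_real (1 / W N) * (\<Sum>n=1..N. complex_of_real (W n - W (n - 1)) * x n)
      - (\<Sum>k=0..N. complex_of_real (L ^ k - L ^ (k + 1)) * x (N - k))
    = (\<Sum>k\<le>N. (increment_weight W N k - (L ^ k - L ^ (k + 1))) *\<^sub>R x (N - k))" for N
    unfolding scaleR_conv_of_real[symmetric] weighted_average_eq_increment_weight_sum atLeast0AtMost
    by (simp add: scaleR_left_diff_distrib sum_subtractf)
  ultimately show ?thesis
    by simp
qed

end
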